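(* Let $V$ be a near vector space over a commutative $F$ with finitely many blocks. Then the complete theory $\mathrm{Th}(V)$ of $V$ in the language $\mathcal L_{Fnvs}=\{+,0,(\lambda)_{\lambda\in F}\}$ admits quantifier elimination (equivalently in $\mathcal L_{\bar Fnvs}$, whose extra symbols are quantifier-free definable).
   Context: A near vector space $(V,F)$: $(V,+)$ a group, $F$ a set of endomorphisms containing $0,1,-1$, with $F\setminus\{0\}$ a subgroup of $\mathrm{Aut}(V,+)$ acting fixed point freely ($\alpha x=\beta x\Rightarrow\alpha=\beta$ or $x=0$), such that the quasi-kernel $Q(V)=\{u:\forall\alpha,\beta\in F\,\exists\gamma\in F\ \alpha u+\beta u=\gamma u\}$ generates $V$. Commutative: $\alpha(\beta v)=\beta(\alpha v)$ for all $\alpha,\beta\in F$, $v\in V$. The blocks of $V$ are the summands in André's decomposition of $V$ into maximal regular near vector subspaces (regular: any two nonzero quasi-kernel elements $u,v$ satisfy $u+\lambda v\in Q(V)$ for some $\lambda\neq0$), each nonzero element of $Q(V)$ lying in exactly one block; for commutative $F$ each block is a vector space over a field $(F,+_i,\circ)$. In $\mathcal L_{Fnvs}$ each $\lambda\in F$ is a unary function symbol interpreted as its action; $\bar F$ is the set of formal finite sums of elements of $F$ acting by pointwise sums, and $\mathcal L_{\bar Fnvs}=\{+,0,(\lambda)_{\lambda\in\bar F}\}$. *)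

theory Defs
  imports Main
begin

text \<open>The additive group (V,+) is the type 'v (class group_add, not assumed abelian);
  F is a set of maps V -> V.\<close>

definition gen_subgroup :: "'v::group_add set \<Rightarrow> 'v set" where
  "gen_subgroup S = \<Inter>{H. 0 \<in> H \<and> (\<forall>x\<in>H. \<forall>y\<in>H. x + y \<in> H) \<and> (\<forall>x\<in>H. - x \<in> H) \<and> S \<subseteq> H}"

definition quasi_kernel :: "('v::group_add \<Rightarrow> 'v) set \<Rightarrow> 'v set" where
  "quasi_kernel F = {u. \<forall>\<alpha>\<in>F. \<forall>\<beta>\<in>F. \<exists>\<gamma>\<in>F. \<alpha> u + \<beta> u = \<gamma> u}"

definition near_vector_space :: "('v::group_add \<Rightarrow> 'v) set \<Rightarrow> bool" where
  "near_vector_space F \<longleftrightarrow>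
     (\<forall>\<alpha>\<in>F. \<forall>x y. \<alpha> (x + y) = \<alpha> x + \<alpha> y) \<and>
     (\<lambda>x. 0) \<in> F \<and> id \<in> F \<and> uminus \<in> F \<and>
     (\<forall>\<alpha>\<in>F - {\<lambda>x. 0}. bij \<alpha> \<and> inv \<alpha> \<in> F) \<and>
     (\<forall>\<alpha>\<in>F - {\<lambda>x. 0}. \<forall>\<beta>\<in>F - {\<lambda>x. 0}. \<alpha> \<circ> \<beta> \<in> F) \<and>
     (\<forall>\<alpha>\<in>F. \<forall>\<beta>\<in>F. \<forall>x. \<alpha> x = \<beta> x \<longrightarrow> \<alpha> = \<beta> \<or> x = 0) \<and>
     gen_subgroup (quasi_kernel F) = UNIV"

definition commutative_nvs :: "('v::group_add \<Rightarrow> 'v) set \<Rightarrow> bool" where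
  "commutative_nvs F \<longleftrightarrow> (\<forall>\<alpha>\<in>F. \<forall>\<beta>\<in>F. \<forall>v. \<alpha> (\<beta> v) = \<beta> (\<alpha> v))"

text \<open>Near vector subspaces, regularity, blocks (maximal regular near vector subspaces).
  For a subspace W, Q(W) = Q(V) \<inter> W, since the defining condition only involves u and F.\<close>

definition nv_subspace :: "('v::group_add \<Rightarrow> 'v) set \<Rightarrow> 'v set \<Rightarrow> bool" where
  "nv_subspace F W \<longleftrightarrow>
     0 \<in> W \<and> (\<forall>x\<in>W. \<forall>y\<in>W. x + y \<in> W) \<and> (\<forall>x\<in>W. - x \<in> W) \<and>
     (\<forall>\<alpha>\<in>F. \<forall>x\<in>W. \<alpha> x \<in> W) \<and>
     gen_subgroup (quasi_kernel F \<inter> W) = W"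

definition regular_subspace :: "('v::group_add \<Rightarrow> 'v) set \<Rightarrow> 'v set \<Rightarrow> bool" where
  "regular_subspace F W \<longleftrightarrow> nv_subspace F W \<and>
     (\<forall>u\<in>quasi_kernel F \<inter> W - {0}. \<forall>v\<in>quasi_kernel F \<inter> W - {0}.
        \<exists>c\<in>F - {\<lambda>x. 0}. u + c v \<in> quasi_kernel F)"

definition is_block :: "('v::group_add \<Rightarrow> 'v) set \<Rightarrow> 'v set \<Rightarrow> bool" where
  "is_block F W \<longleftrightarrow> regular_subspace F W \<and>
     (\<forall>W'. regular_subspace F W' \<and> W \<subseteq> W' \<longrightarrow> W' = W)"

text \<open>Unary function symbols are labelled by elements of type 'f; a term/formula is in the
  language L_Fnvs iff all labels belong to F.\<close>

datatype 'f tm = Var nat | Zero | Plus "'f tm" "'f tm" | Scal 'f "'f tm"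

datatype 'f fm = Eq "'f tm" "'f tm" | Neg "'f fm" | Conj "'f fm" "'f fm" | Ex nat "'f fm"

primrec tm_syms :: "'f tm \<Rightarrow> 'f set" where
  "tm_syms (Var n) = {}"
| "tm_syms Zero = {}"
| "tm_syms (Plus s t) = tm_syms s \<union> tm_syms t"
| "tm_syms (Scal f t) = insert f (tm_syms t)"

primrec fm_syms :: "'f fm \<Rightarrow> 'f set" where
  "fm_syms (Eq s t) = tm_syms s \<union> tm_syms t"
| "fm_syms (Neg \<phi>) = fm_syms \<phi>"
| "fm_syms (Conj \<phi> \<psi>) = fm_syms \<phi> \<union> fm_syms \<psi>"
| "fm_syms (Ex n \<phi>) = fm_syms \<phi>"

primrec tm_vars :: "'f tm \<Rightarrow> nat set" where
  "tm_vars (Var n) = {n}"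
| "tm_vars Zero = {}"
| "tm_vars (Plus s t) = tm_vars s \<union> tm_vars t"
| "tm_vars (Scal f t) = tm_vars t"

primrec free_vars :: "'f fm \<Rightarrow> nat set" where
  "free_vars (Eq s t) = tm_vars s \<union> tm_vars t"
| "free_vars (Neg \<phi>) = free_vars \<phi>"
| "free_vars (Conj \<phi> \<psi>) = free_vars \<phi> \<union> free_vars \<psi>"
| "free_vars (Ex n \<phi>) = free_vars \<phi> - {n}"

primrec qfree :: "'f fm \<Rightarrow> bool" where
  "qfree (Eq s t) = True"
| "qfree (Neg \<phi>) = qfree \<phi>"
| "qfree (Conj \<phi> \<psi>) = (qfree \<phi> \<and> qfree \<psi>)"
| "qfree (Ex n \<phi>) = False"

primrec tm_eval :: "(nat \<Rightarrow> 'v::group_add) \<Rightarrow> ('v \<Rightarrow> 'v) tm \<Rightarrow> 'v" where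
  "tm_eval e (Var n) = e n"
| "tm_eval e Zero = 0"
| "tm_eval e (Plus s t) = tm_eval e s + tm_eval e t"
| "tm_eval e (Scal f t) = f (tm_eval e t)"

primrec sat :: "(nat \<Rightarrow> 'v::group_add) \<Rightarrow> ('v \<Rightarrow> 'v) fm \<Rightarrow> bool" where
  "sat e (Eq s t) = (tm_eval e s = tm_eval e t)"
| "sat e (Neg \<phi>) = (\<not> sat e \<phi>)"
| "sat e (Conj \<phi> \<psi>) = (sat e \<phi> \<and> sat e \<psi>)"
| "sat e (Ex n \<phi>) = (\<exists>x. sat (e(n := x)) \<phi>)"

text \<open>Th(V) admits quantifier elimination: every L_Fnvs-formula is equivalent modulo Th(V)
  (i.e. equivalent in V, as Th(V) is the complete theory of V) to a quantifier-free
  L_Fnvs-formula with no new free variables.\<close>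

definition admits_QE :: "('v::group_add \<Rightarrow> 'v) set \<Rightarrow> bool" where
  "admits_QE F \<longleftrightarrow> (\<forall>\<phi>. fm_syms \<phi> \<subseteq> F \<longrightarrow>
     (\<exists>\<psi>. qfree \<psi> \<and> fm_syms \<psi> \<subseteq> F \<and> free_vars \<psi> \<subseteq> free_vars \<phi> \<and>
          (\<forall>e. sat e \<phi> \<longleftrightarrow> sat e \<psi>)))"

end

theory Submission
  imports Defs
begin

(*
  Call two nonzero elements p, q of the quasi-kernel Q equivalent if they induce the same
  addition on F, i.e. a p + b p = c p iff a q + b q = c q.  Whenever p, q and p + q lie in Q,
  p and q are equivalent; hence every class together with 0 is a subgroup, indeed a block, and
  V is the direct sum of its finitely many blocks B_1, ..., B_k.  The projections onto the blocks
  are given by terms: if a p + b p = c p fails at q, then a + b - (a +_q b) kills B_q and is a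
  nonzero scalar on B_p, and composing rescaled maps of this kind separates the blocks.

  The i-th component of an atom s = t reads d (x_i) = c with d in F and c a term without x,
  where x_i is the i-th component of x.  Either d = 0 and the equation does not involve x, or it
  forces x_i to be the value of the solution term d^-1 c.  So Ex x. psi is equivalent to the
  disjunction, over all ways of letting each x_i be one of these finitely many solutions or differ
  from all of them, of the resulting quantifier-free instances of psi; a value of B_i differing
  from all solutions exists iff the solutions take fewer values than B_i has elements.
*)

abbreviation zero_map :: "'v::zero \<Rightarrow> 'v" where
  "zero_map \<equiv> \<lambda>x. 0"

lemma gen_subgroup_least:
  fixes H :: "'v::group_add set"
  assumes "0 \<in> H" and "\<And>x y. x \<in> H \<Longrightarrow> y \<in> H \<Longrightarrow> x + y \<in> H"
    and "\<And>x. x \<in> H \<Longrightarrow> - x \<in> H" and "S \<subseteq> H"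
  shows "gen_subgroup S \<subseteq> H"
  using assms unfolding gen_subgroup_def by blast

lemma gen_subgroup_superset: "S \<subseteq> gen_subgroup S"
  unfolding gen_subgroup_def by blast

locale nvs =
  fixes F :: "('v::group_add \<Rightarrow> 'v) set"
  assumes near_vector_space: "near_vector_space F"
begin

abbreviation Q :: "'v set" where
  "Q \<equiv> quasi_kernel F"

lemma F_add: "\<alpha> \<in> F \<Longrightarrow> \<alpha> (x + y) = \<alpha> x + \<alpha> y"
  using near_vector_space unfolding near_vector_space_def by (elim conjE) blast

lemma zero_map_in_F [simp]: "zero_map \<in> F"
  and id_in_F [simp]: "id \<in> F"
  and uminus_in_F [simp]: "uminus \<in> F"
  using near_vector_space unfolding near_vector_space_def by simp_all

lemma bij_F: "\<alpha> \<in> F \<Longrightarrow> \<alpha> \<noteq> zero_map \<Longrightarrow> bij \<alpha>"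
  using near_vector_space unfolding near_vector_space_def by (elim conjE) blast

lemma inv_in_F: "\<alpha> \<in> F \<Longrightarrow> \<alpha> \<noteq> zero_map \<Longrightarrow> inv \<alpha> \<in> F"
  using near_vector_space unfolding near_vector_space_def by (elim conjE) blast

lemma F_eq_at_nonzero: "\<alpha> \<in> F \<Longrightarrow> \<beta> \<in> F \<Longrightarrow> \<alpha> x = \<beta> x \<Longrightarrow> x \<noteq> 0 \<Longrightarrow> \<alpha> = \<beta>"
  using near_vector_space unfolding near_vector_space_def by (elim conjE) blast

lemma gen_quasi_kernel: "gen_subgroup Q = UNIV"
  using near_vector_space unfolding near_vector_space_def by (elim conjE)

lemma F_zero [simp]: "\<alpha> \<in> F \<Longrightarrow> \<alpha> 0 = 0"
proof -
  assume "\<alpha> \<in> F"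
  then have "\<alpha> 0 + \<alpha> 0 = \<alpha> 0 + 0"
    using F_add[of \<alpha> 0 0] by simp
  then show ?thesis
    by (rule add_left_imp_eq)
qed

lemma comp_in_F:
  assumes "\<alpha> \<in> F" and "\<beta> \<in> F"
  shows "\<alpha> \<circ> \<beta> \<in> F"
proof (cases "\<alpha> = zero_map \<or> \<beta> = zero_map")
  case True
  then have "\<alpha> \<circ> \<beta> = zero_map"
    using assms by (auto simp: fun_eq_iff)
  then show ?thesis
    by simp
next
  case False
  then show ?thesis
    using assms near_vector_space unfolding near_vector_space_def by (elim conjE) blast
qed

lemma inv_F_apply [simp]: "\<alpha> \<in> F \<Longrightarrow> \<alpha> \<noteq> zero_map \<Longrightarrow> inv \<alpha> (\<alpha> x) = x"
  using bij_F bij_is_inj inv_f_f by metis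

lemma F_inv_apply [simp]: "\<alpha> \<in> F \<Longrightarrow> \<alpha> \<noteq> zero_map \<Longrightarrow> \<alpha> (inv \<alpha> x) = x"
  using bij_F bij_is_surj surj_f_inv_f by metis

lemma F_eq_zero_at_nonzero: "\<alpha> \<in> F \<Longrightarrow> \<alpha> x = 0 \<Longrightarrow> x \<noteq> 0 \<Longrightarrow> \<alpha> = zero_map"
  using F_eq_at_nonzero[of \<alpha> zero_map x] by simp

text \<open>In any group \<open>-(x + y) = -y + -x\<close>; additivity of \<open>uminus \<in> F\<close> forces \<open>V\<close> to be abelian.\<close>

lemma add_commute: "(x::'v) + y = y + x"
proof -
  have "- (- y + - x) = - (- y) + - (- x)"
    by (rule F_add[OF uminus_in_F])
  then show ?thesis
    by (simp add: minus_add)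
qed

sublocale vadd: comm_monoid "(+)" "0 :: 'v"
  by unfold_locales (simp_all add: add.assoc add_commute)

sublocale vsum: comm_monoid_set "(+)" "0 :: 'v" ..

lemma add_eq_add_iff: "(x::'v) + y = z + w \<longleftrightarrow> x - z = w - y"
proof -
  have "x + y = z + w \<longleftrightarrow> x = z + w - y"
    by (simp add: eq_diff_eq)
  also have "z + w - y = z + (w - y)"
    by (rule add_diff_eq[symmetric])
  also have "\<dots> = (w - y) + z"
    by (rule add_commute)
  also have "x = (w - y) + z \<longleftrightarrow> x - z = w - y"
    by (simp add: diff_eq_eq)
  finally show ?thesis .
qed

lemma zero_in_quasi_kernel: "0 \<in> Q"
  unfolding quasi_kernel_def by (auto intro!: bexI[of _ zero_map])

lemma quasi_kernel_induct [case_names zero add minus quasi_kernel]: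
  assumes "P 0" and "\<And>x y. P x \<Longrightarrow> P y \<Longrightarrow> P (x + y)" and "\<And>x. P x \<Longrightarrow> P (- x)"
    and "\<And>q. q \<in> Q \<Longrightarrow> q \<noteq> 0 \<Longrightarrow> P q"
  shows "P x"
proof -
  have "gen_subgroup Q \<subseteq> {x. P x}"
    by (rule gen_subgroup_least) (use assms in auto)
  then show ?thesis
    using gen_quasi_kernel by blast
qed

definition coeff_add :: "'v \<Rightarrow> ('v \<Rightarrow> 'v) \<Rightarrow> ('v \<Rightarrow> 'v) \<Rightarrow> ('v \<Rightarrow> 'v)" where
  "coeff_add q \<alpha> \<beta> = (SOME \<gamma>. \<gamma> \<in> F \<and> \<alpha> q + \<beta> q = \<gamma> q)"

lemma coeff_add_in_F: "q \<in> Q \<Longrightarrow> \<alpha> \<in> F \<Longrightarrow> \<beta> \<in> F \<Longrightarrow> coeff_add q \<alpha> \<beta> \<in> F"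
  and coeff_add_apply: "q \<in> Q \<Longrightarrow> \<alpha> \<in> F \<Longrightarrow> \<beta> \<in> F \<Longrightarrow> \<alpha> q + \<beta> q = coeff_add q \<alpha> \<beta> q"
proof -
  assume "q \<in> Q" "\<alpha> \<in> F" "\<beta> \<in> F"
  then have "\<exists>\<gamma>. \<gamma> \<in> F \<and> \<alpha> q + \<beta> q = \<gamma> q"
    unfolding quasi_kernel_def by blast
  from someI_ex[OF this] show "coeff_add q \<alpha> \<beta> \<in> F" and "\<alpha> q + \<beta> q = coeff_add q \<alpha> \<beta> q"
    unfolding coeff_add_def by blast+
qed

lemma coeff_add_unique:
  "q \<in> Q \<Longrightarrow> q \<noteq> 0 \<Longrightarrow> \<alpha> \<in> F \<Longrightarrow> \<beta> \<in> F \<Longrightarrow> \<gamma> \<in> F \<Longrightarrow>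
    \<alpha> q + \<beta> q = \<gamma> q \<longleftrightarrow> \<gamma> = coeff_add q \<alpha> \<beta>"
  by (metis F_eq_at_nonzero coeff_add_apply coeff_add_in_F)

definition same_addition :: "'v \<Rightarrow> 'v \<Rightarrow> bool" where
  "same_addition p q \<longleftrightarrow> (\<forall>\<alpha>\<in>F. \<forall>\<beta>\<in>F. \<forall>\<gamma>\<in>F. \<alpha> p + \<beta> p = \<gamma> p \<longleftrightarrow> \<alpha> q + \<beta> q = \<gamma> q)"

lemma same_addition_refl: "same_addition p p"
  and same_addition_sym: "same_addition p q \<Longrightarrow> same_addition q p"
  and same_addition_trans: "same_addition p q \<Longrightarrow> same_addition q r \<Longrightarrow> same_addition p r"
  by (simp_all add: same_addition_def)

lemma add_in_quasi_kernel:
  assumes p: "p \<in> Q" and same: "same_addition p q"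
  shows "p + q \<in> Q"
  unfolding quasi_kernel_def
proof (intro CollectI ballI)
  fix \<alpha> \<beta> assume \<alpha>: "\<alpha> \<in> F" and \<beta>: "\<beta> \<in> F"
  let ?\<gamma> = "coeff_add p \<alpha> \<beta>"
  have \<gamma>: "?\<gamma> \<in> F"
    using coeff_add_in_F[OF p \<alpha> \<beta>] .
  have "\<alpha> q + \<beta> q = ?\<gamma> q"
    using same coeff_add_apply[OF p \<alpha> \<beta>] \<alpha> \<beta> \<gamma> unfolding same_addition_def by blast
  have "\<alpha> (p + q) + \<beta> (p + q) = (\<alpha> p + \<beta> p) + (\<alpha> q + \<beta> q)"
    using \<alpha> \<beta> by (simp add: F_add add.assoc vadd.left_commute)
  also have "\<dots> = ?\<gamma> (p + q)"
    using coeff_add_apply[OF p \<alpha> \<beta>] \<open>\<alpha> q + \<beta> q = ?\<gamma> q\<close> F_add[OF \<gamma>] by simp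
  finally have "\<alpha> (p + q) + \<beta> (p + q) = ?\<gamma> (p + q)" .
  then show "\<exists>\<gamma>\<in>F. \<alpha> (p + q) + \<beta> (p + q) = \<gamma> (p + q)"
    using \<gamma> by blast
qed

text \<open>If \<open>p, q, p + q \<in> Q\<close> and \<open>p\<close> is not a multiple of \<open>q\<close>, then \<open>p\<close> and \<open>q\<close> induce the same
  addition: comparing \<open>(\<alpha> +\<^sub>p \<beta>) p + (\<alpha> +\<^sub>q \<beta>) q\<close> with \<open>(\<alpha> +\<^sub>p\<^sub>+\<^sub>q \<beta>) (p + q)\<close> gives \<open>\<delta> p = \<delta>' q\<close> with
  \<open>\<delta>, \<delta>' \<in> F\<close>, and \<open>\<delta> \<noteq> 0\<close> would make \<open>p = (\<delta>\<^sup>-\<^sup>1 \<circ> \<delta>') q\<close>.\<close>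

lemma coeff_add_eq_if_add_in_quasi_kernel:
  assumes p: "p \<in> Q" "p \<noteq> 0" and q: "q \<in> Q" "q \<noteq> 0" and pq: "p + q \<in> Q"
    and not_multiple: "\<not> (\<exists>\<mu>\<in>F. \<mu> \<noteq> zero_map \<and> p = \<mu> q)"
    and \<alpha>: "\<alpha> \<in> F" and \<beta>: "\<beta> \<in> F"
  shows "coeff_add p \<alpha> \<beta> = coeff_add q \<alpha> \<beta>"
proof -
  define A where "A = coeff_add p \<alpha> \<beta>"
  define B where "B = coeff_add q \<alpha> \<beta>"
  define G where "G = coeff_add (p + q) \<alpha> \<beta>"
  have AF: "A \<in> F" and BF: "B \<in> F" and GF: "G \<in> F" and mGF: "uminus \<circ> G \<in> F" and mBF: "uminus \<circ> B \<in> F"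
    using coeff_add_in_F p q pq \<alpha> \<beta> comp_in_F unfolding A_def B_def G_def by auto
  have "A p + B q = (\<alpha> p + \<beta> p) + (\<alpha> q + \<beta> q)"
    using coeff_add_apply p q \<alpha> \<beta> unfolding A_def B_def by simp
  also have "\<dots> = \<alpha> (p + q) + \<beta> (p + q)"
    using \<alpha> \<beta> by (simp add: F_add add.assoc vadd.left_commute)
  also have "\<dots> = G p + G q"
    using coeff_add_apply[OF pq \<alpha> \<beta>] F_add[OF GF] unfolding G_def by simp
  finally have "A p - G p = G q - B q"
    by (simp only: add_eq_add_iff)
  moreover define \<delta> where "\<delta> = coeff_add p A (uminus \<circ> G)"
  moreover define \<delta>' where "\<delta>' = coeff_add q G (uminus \<circ> B)"
  ultimately have \<delta>\<delta>': "\<delta> p = \<delta>' q" and \<delta>p: "\<delta> p = A p - G p" and \<delta>'q: "\<delta>' q = G q - B q"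
    using coeff_add_apply[OF p(1) AF mGF] coeff_add_apply[OF q(1) GF mBF] by simp_all
  have \<delta>F: "\<delta> \<in> F" and \<delta>'F: "\<delta>' \<in> F"
    using coeff_add_in_F p q AF GF mGF mBF unfolding \<delta>_def \<delta>'_def by auto
  have "\<delta> = zero_map"
  proof (rule ccontr)
    assume \<delta>0: "\<delta> \<noteq> zero_map"
    have "p = (inv \<delta> \<circ> \<delta>') q"
      using \<delta>\<delta>' inv_F_apply[OF \<delta>F \<delta>0, of p] by simp
    moreover have "inv \<delta> \<circ> \<delta>' \<in> F"
      using comp_in_F inv_in_F \<delta>F \<delta>'F \<delta>0 by blast
    moreover have "inv \<delta> \<circ> \<delta>' \<noteq> zero_map"
      using calculation(1) p(2) by force
    ultimately show False
      using not_multiple by blast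
  qed
  then have "A p = G p" and "G q = B q"
    using \<delta>\<delta>' \<delta>p \<delta>'q by simp_all
  then show ?thesis
    using F_eq_at_nonzero AF BF GF p(2) q(2) unfolding A_def B_def by metis
qed

end

locale comm_nvs = nvs F for F :: "('v::group_add \<Rightarrow> 'v) set" +
  assumes commutative: "commutative_nvs F"
begin

lemma F_commute: "\<alpha> \<in> F \<Longrightarrow> \<beta> \<in> F \<Longrightarrow> \<alpha> (\<beta> v) = \<beta> (\<alpha> v)"
  using commutative unfolding commutative_nvs_def by blast

lemma F_closed_quasi_kernel:
  assumes c: "c \<in> F" and q: "q \<in> Q"
  shows "c q \<in> Q"
  unfolding quasi_kernel_def
proof (intro CollectI ballI)
  fix \<alpha> \<beta> assume \<alpha>: "\<alpha> \<in> F" and \<beta>: "\<beta> \<in> F"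
  have "\<alpha> (c q) + \<beta> (c q) = c (\<alpha> q + \<beta> q)"
    using \<alpha> \<beta> c by (simp add: F_add F_commute)
  also have "\<dots> = c (coeff_add q \<alpha> \<beta> q)"
    using coeff_add_apply[OF q \<alpha> \<beta>] by simp
  also have "\<dots> = coeff_add q \<alpha> \<beta> (c q)"
    using c coeff_add_in_F[OF q \<alpha> \<beta>] by (simp add: F_commute)
  finally show "\<exists>\<gamma>\<in>F. \<alpha> (c q) + \<beta> (c q) = \<gamma> (c q)"
    using coeff_add_in_F[OF q \<alpha> \<beta>] by blast
qed

lemma same_addition_scale:
  assumes c: "c \<in> F" "c \<noteq> zero_map"
  shows "same_addition (c q) q"
  unfolding same_addition_def
proof (intro ballI)
  fix \<alpha> \<beta> \<gamma> assume "\<alpha> \<in> F" "\<beta> \<in> F" "\<gamma> \<in> F"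
  then have "\<alpha> (c q) + \<beta> (c q) = c (\<alpha> q + \<beta> q)" and "\<gamma> (c q) = c (\<gamma> q)"
    using c by (simp_all add: F_add F_commute)
  then show "\<alpha> (c q) + \<beta> (c q) = \<gamma> (c q) \<longleftrightarrow> \<alpha> q + \<beta> q = \<gamma> q"
    using bij_F[OF c] by (simp add: bij_is_inj inj_eq)
qed

lemma same_addition_if_add_in_quasi_kernel:
  assumes p: "p \<in> Q" "p \<noteq> 0" and q: "q \<in> Q" "q \<noteq> 0" and pq: "p + q \<in> Q"
  shows "same_addition p q"
proof (cases "\<exists>\<mu>\<in>F. \<mu> \<noteq> zero_map \<and> p = \<mu> q")
  case True
  then show ?thesis
    using same_addition_scale by blast
next
  case False
  show ?thesis
    unfolding same_addition_def
    using coeff_add_unique[OF p] coeff_add_unique[OF q]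
      coeff_add_eq_if_add_in_quasi_kernel[OF p q pq False] by simp
qed

section \<open>Blocks\<close>

definition block_of :: "'v \<Rightarrow> 'v set" where
  "block_of q = {p \<in> Q. p = 0 \<or> same_addition p q}"

lemma block_of_subset_quasi_kernel: "block_of q \<subseteq> Q"
  by (auto simp: block_of_def)

lemma zero_in_block_of [simp]: "0 \<in> block_of q"
  by (simp add: block_of_def zero_in_quasi_kernel)

lemma in_block_of_self: "q \<in> Q \<Longrightarrow> q \<in> block_of q"
  by (simp add: block_of_def same_addition_refl)

lemma in_block_of_iff: "p \<noteq> 0 \<Longrightarrow> p \<in> block_of q \<longleftrightarrow> p \<in> Q \<and> same_addition p q"
  by (simp add: block_of_def)

lemma block_of_eq: "same_addition p q \<Longrightarrow> block_of p = block_of q"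
  unfolding block_of_def using same_addition_trans same_addition_sym by blast

lemma F_closed_block_of:
  assumes c: "c \<in> F" and p: "p \<in> block_of q"
  shows "c p \<in> block_of q"
proof (cases "c = zero_map \<or> p = 0")
  case True
  then show ?thesis
    using c by auto
next
  case False
  then have "p \<in> Q" and "same_addition p q"
    using p by (simp_all add: in_block_of_iff)
  moreover have "same_addition (c p) p"
    using same_addition_scale c False by blast
  ultimately show ?thesis
    unfolding block_of_def using F_closed_quasi_kernel[OF c] same_addition_trans by blast
qed

lemma minus_in_block_of: "p \<in> block_of q \<Longrightarrow> - p \<in> block_of q"
  using F_closed_block_of[OF uminus_in_F] by simp

lemma add_in_block_of:
  assumes p1: "p1 \<in> block_of q" and p2: "p2 \<in> block_of q"
  shows "p1 + p2 \<in> block_of q"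
proof (cases "p1 = 0 \<or> p2 = 0 \<or> p1 + p2 = 0")
  case True
  then show ?thesis
    using p1 p2 by auto
next
  case False
  then have Q1: "p1 \<in> Q" and Q2: "p2 \<in> Q" and s1: "same_addition p1 q" and s2: "same_addition p2 q"
    using p1 p2 by (auto simp: block_of_def)
  have sum_Q: "p1 + p2 \<in> Q"
    using add_in_quasi_kernel[OF Q1 same_addition_trans[OF s1 same_addition_sym[OF s2]]] .
  have minus_p2: "- p2 \<in> Q" "- p2 \<noteq> 0"
    using F_closed_quasi_kernel[OF uminus_in_F Q2] False by auto
  have "same_addition (p1 + p2) (- p2)"
    using same_addition_if_add_in_quasi_kernel[OF sum_Q _ minus_p2] False Q1 by (simp add: add.assoc)
  moreover have "(uminus :: 'v \<Rightarrow> 'v) \<noteq> zero_map"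
    using fun_cong[of uminus zero_map p2] False by auto
  then have "same_addition (- p2) p2"
    using same_addition_scale[OF uminus_in_F] by simp
  ultimately have "same_addition (p1 + p2) q"
    using s2 same_addition_trans by blast
  then show ?thesis
    using sum_Q by (simp add: block_of_def)
qed

lemma coeff_add_apply_block_of:
  assumes p: "p \<in> Q" and w: "w \<in> block_of p" and \<alpha>: "\<alpha> \<in> F" and \<beta>: "\<beta> \<in> F"
  shows "\<alpha> w + \<beta> w = coeff_add p \<alpha> \<beta> w"
proof (cases "w = 0")
  case True
  then show ?thesis
    using \<alpha> \<beta> coeff_add_in_F[OF p \<alpha> \<beta>] by simp
next
  case False
  then have "same_addition w p"
    using w by (simp add: block_of_def)
  then show ?thesis
    using coeff_add_apply[OF p \<alpha> \<beta>] coeff_add_in_F[OF p \<alpha> \<beta>] \<alpha> \<beta> unfolding same_addition_def by blast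
qed

lemma regular_subspace_quasi_kernel_subset_block_of:
  assumes W: "regular_subspace F W" and q: "q \<in> Q" "q \<noteq> 0" "q \<in> W"
  shows "Q \<inter> W \<subseteq> block_of q"
proof
  fix p assume p: "p \<in> Q \<inter> W"
  show "p \<in> block_of q"
  proof (cases "p = 0")
    case False
    have "\<forall>u\<in>Q \<inter> W - {0}. \<forall>v\<in>Q \<inter> W - {0}. \<exists>c\<in>F - {zero_map}. u + c v \<in> Q"
      using W unfolding regular_subspace_def by (elim conjE)
    then obtain c where c: "c \<in> F" "c \<noteq> zero_map" "p + c q \<in> Q"
      using False p q by blast
    have cq: "c q \<in> Q" "c q \<noteq> 0"
      using F_closed_quasi_kernel F_eq_zero_at_nonzero c q by auto
    have "same_addition p (c q)"
      using same_addition_if_add_in_quasi_kernel[OF _ False cq] p c by blast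
    then have "same_addition p q"
      using same_addition_scale[OF c(1,2)] same_addition_trans by blast
    then show ?thesis
      using p by (simp add: block_of_def)
  qed simp
qed

lemma gen_subgroup_block_of: "gen_subgroup (Q \<inter> block_of q) = block_of q"
proof -
  have "gen_subgroup (block_of q) \<subseteq> block_of q"
    by (rule gen_subgroup_least) (auto intro: add_in_block_of minus_in_block_of)
  then show ?thesis
    using gen_subgroup_superset[of "block_of q"] block_of_subset_quasi_kernel
    by (simp add: Int_absorb1)
qed

lemma is_block_block_of:
  assumes q: "q \<in> Q" "q \<noteq> 0"
  shows "is_block F (block_of q)"
  unfolding is_block_def
proof (intro conjI allI impI)
  show "regular_subspace F (block_of q)"
    unfolding regular_subspace_def
  proof (intro conjI ballI)
    show "nv_subspace F (block_of q)"
      unfolding nv_subspace_def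
      by (simp add: gen_subgroup_block_of F_closed_block_of add_in_block_of minus_in_block_of)
    fix u v assume "u \<in> Q \<inter> block_of q - {0}" and "v \<in> Q \<inter> block_of q - {0}"
    then have "u + id v \<in> block_of q"
      by (simp add: add_in_block_of)
    then have "u + id v \<in> Q"
      using block_of_subset_quasi_kernel by blast
    moreover have "(id :: 'v \<Rightarrow> 'v) \<noteq> zero_map"
      using fun_cong[of id zero_map q] q(2) by auto
    ultimately show "\<exists>c\<in>F - {zero_map}. u + c v \<in> Q"
      using id_in_F by blast
  qed
  fix W assume W: "regular_subspace F W \<and> block_of q \<subseteq> W"
  then have "Q \<inter> W \<subseteq> block_of q"
    using regular_subspace_quasi_kernel_subset_block_of in_block_of_self q by blast
  then have "gen_subgroup (Q \<inter> W) \<subseteq> block_of q"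
    by (intro gen_subgroup_least) (auto intro: add_in_block_of minus_in_block_of)
  moreover have "gen_subgroup (Q \<inter> W) = W"
    using W unfolding regular_subspace_def nv_subspace_def by (elim conjE)
  ultimately show "W = block_of q"
    using W by blast
qed

end

section \<open>Definable projections onto the blocks\<close>

definition term_definable :: "('v::group_add \<Rightarrow> 'v) set \<Rightarrow> ('v \<Rightarrow> 'v) \<Rightarrow> bool" where
  "term_definable F r \<longleftrightarrow> (\<exists>T. \<forall>t. (\<forall>e. tm_eval e (T t) = r (tm_eval e t)) \<and>
     tm_vars (T t) = tm_vars t \<and> tm_syms (T t) \<subseteq> F \<union> tm_syms t)"

lemma term_definable_symbol: "f \<in> F \<Longrightarrow> term_definable F f"
  unfolding term_definable_def by (rule exI[of _ "Scal f"]) auto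

lemma term_definable_add:
  assumes "term_definable F r" and "term_definable F s"
  shows "term_definable F (\<lambda>x. r x + s x)"
proof -
  obtain R S where "\<forall>t. (\<forall>e. tm_eval e (R t) = r (tm_eval e t)) \<and> tm_vars (R t) = tm_vars t \<and>
      tm_syms (R t) \<subseteq> F \<union> tm_syms t"
    and "\<forall>t. (\<forall>e. tm_eval e (S t) = s (tm_eval e t)) \<and> tm_vars (S t) = tm_vars t \<and>
      tm_syms (S t) \<subseteq> F \<union> tm_syms t"
    using assms unfolding term_definable_def by blast
  then show ?thesis
    unfolding term_definable_def by (intro exI[of _ "\<lambda>t. Plus (R t) (S t)"]) auto
qed

lemma term_definable_comp:
  assumes "term_definable F r" and "term_definable F s"
  shows "term_definable F (r \<circ> s)"
proof -
  obtain R S where "\<forall>t. (\<forall>e. tm_eval e (R t) = r (tm_eval e t)) \<and> tm_vars (R t) = tm_vars t \<and>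
      tm_syms (R t) \<subseteq> F \<union> tm_syms t"
    and "\<forall>t. (\<forall>e. tm_eval e (S t) = s (tm_eval e t)) \<and> tm_vars (S t) = tm_vars t \<and>
      tm_syms (S t) \<subseteq> F \<union> tm_syms t"
    using assms unfolding term_definable_def by blast
  then show ?thesis
    unfolding term_definable_def by (intro exI[of _ "\<lambda>t. R (S t)"]) fastforce
qed

context comm_nvs
begin

definition blockwise_scalar :: "('v \<Rightarrow> 'v) \<Rightarrow> bool" where
  "blockwise_scalar r \<longleftrightarrow> (\<forall>x y. r (x + y) = r x + r y) \<and> (\<forall>c\<in>F. \<forall>x. r (c x) = c (r x)) \<and>
     (\<forall>p\<in>Q - {0}. \<exists>c\<in>F. \<forall>w\<in>block_of p. r w = c w) \<and> term_definable F r"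

lemma blockwise_scalar_add: "blockwise_scalar r \<Longrightarrow> r (x + y) = r x + r y"
  and blockwise_scalar_commute: "blockwise_scalar r \<Longrightarrow> c \<in> F \<Longrightarrow> r (c x) = c (r x)"
  and blockwise_scalar_on_block:
    "blockwise_scalar r \<Longrightarrow> p \<in> Q \<Longrightarrow> p \<noteq> 0 \<Longrightarrow> \<exists>c\<in>F. \<forall>w\<in>block_of p. r w = c w"
  and blockwise_scalar_term_definable: "blockwise_scalar r \<Longrightarrow> term_definable F r"
  by (simp_all add: blockwise_scalar_def)

lemma blockwise_scalar_zero: "blockwise_scalar r \<Longrightarrow> r 0 = 0"
  using blockwise_scalar_commute[of r zero_map 0] by simp

lemma blockwise_scalar_maps_block:
  assumes "blockwise_scalar r" and "p \<in> Q" "p \<noteq> 0" and w: "w \<in> block_of p"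
  shows "r w \<in> block_of p"
proof -
  obtain c where "c \<in> F" "\<forall>w\<in>block_of p. r w = c w"
    using blockwise_scalar_on_block assms by blast
  then show ?thesis
    using F_closed_block_of w by simp
qed

lemma blockwise_scalar_vsum:
  assumes "blockwise_scalar r" and "finite A"
  shows "r (vsum.F f A) = vsum.F (\<lambda>i. r (f i)) A"
  using assms(2) by induction (simp_all add: blockwise_scalar_zero[OF assms(1)] blockwise_scalar_add[OF assms(1)])

lemma blockwise_scalar_F:
  assumes c: "c \<in> F"
  shows "blockwise_scalar c"
  unfolding blockwise_scalar_def
proof (intro conjI allI ballI)
  show "c (x + y) = c x + c y" for x y
    using F_add[OF c] .
  show "c (d x) = d (c x)" if "d \<in> F" for d x
    using F_commute[OF c that] .
  show "\<exists>d\<in>F. \<forall>w\<in>block_of p. c w = d w" for p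
    using c by blast
  show "term_definable F c"
    using term_definable_symbol[OF c] .
qed

lemma blockwise_scalar_plus:
  assumes r: "blockwise_scalar r" and s: "blockwise_scalar s"
  shows "blockwise_scalar (\<lambda>x. r x + s x)"
  unfolding blockwise_scalar_def
proof (intro conjI allI ballI)
  show "r (x + y) + s (x + y) = (r x + s x) + (r y + s y)" for x y
    using r s by (simp add: blockwise_scalar_add add.assoc vadd.left_commute)
  show "r (c x) + s (c x) = c (r x + s x)" if "c \<in> F" for c x
    using r s that by (simp add: blockwise_scalar_commute F_add)
  show "\<exists>c\<in>F. \<forall>w\<in>block_of p. r w + s w = c w" if "p \<in> Q - {0}" for p
  proof -
    have p: "p \<in> Q" "p \<noteq> 0"
      using that by simp_all
    obtain \<alpha> where \<alpha>: "\<alpha> \<in> F" "\<forall>w\<in>block_of p. r w = \<alpha> w"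
      using blockwise_scalar_on_block[OF r p] by blast
    obtain \<beta> where \<beta>: "\<beta> \<in> F" "\<forall>w\<in>block_of p. s w = \<beta> w"
      using blockwise_scalar_on_block[OF s p] by blast
    have "\<forall>w\<in>block_of p. r w + s w = coeff_add p \<alpha> \<beta> w"
      using coeff_add_apply_block_of[OF p(1) _ \<alpha>(1) \<beta>(1)] \<alpha>(2) \<beta>(2) by simp
    then show ?thesis
      using coeff_add_in_F[OF p(1) \<alpha>(1) \<beta>(1)] by blast
  qed
  show "term_definable F (\<lambda>x. r x + s x)"
    using r s by (simp add: blockwise_scalar_term_definable term_definable_add)
qed

lemma blockwise_scalar_comp:
  assumes r: "blockwise_scalar r" and s: "blockwise_scalar s"
  shows "blockwise_scalar (r \<circ> s)"
  unfolding blockwise_scalar_def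
proof (intro conjI allI ballI)
  show "(r \<circ> s) (x + y) = (r \<circ> s) x + (r \<circ> s) y" for x y
    using r s by (simp add: blockwise_scalar_add)
  show "(r \<circ> s) (c x) = c ((r \<circ> s) x)" if "c \<in> F" for c x
    using r s that by (simp add: blockwise_scalar_commute)
  show "\<exists>c\<in>F. \<forall>w\<in>block_of p. (r \<circ> s) w = c w" if "p \<in> Q - {0}" for p
  proof -
    have p: "p \<in> Q" "p \<noteq> 0"
      using that by simp_all
    obtain \<alpha> where \<alpha>: "\<alpha> \<in> F" "\<forall>w\<in>block_of p. r w = \<alpha> w"
      using blockwise_scalar_on_block[OF r p] by blast
    obtain \<beta> where \<beta>: "\<beta> \<in> F" "\<forall>w\<in>block_of p. s w = \<beta> w"
      using blockwise_scalar_on_block[OF s p] by blast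
    have "\<forall>w\<in>block_of p. (r \<circ> s) w = (\<alpha> \<circ> \<beta>) w"
      using \<alpha> \<beta> F_closed_block_of by simp
    then show ?thesis
      using comp_in_F[OF \<alpha>(1) \<beta>(1)] by blast
  qed
  show "term_definable F (r \<circ> s)"
    using r s by (simp add: blockwise_scalar_term_definable term_definable_comp)
qed

text \<open>If \<open>\<alpha> p + \<beta> p = \<gamma> p\<close> but \<open>\<alpha> q + \<beta> q \<noteq> \<gamma> q\<close>, then \<open>\<alpha> + \<beta> - (\<alpha> +\<^sub>q \<beta>)\<close> vanishes on the block of \<open>q\<close>
  and is a nonzero scalar on the block of \<open>p\<close>; rescaling gives the separating map.\<close>

lemma separating_map_exists:
  assumes p: "p \<in> Q" "p \<noteq> 0" and q: "q \<in> Q" "q \<noteq> 0" and not_same: "\<not> same_addition p q"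
  shows "\<exists>f. blockwise_scalar f \<and> (\<forall>w\<in>block_of p. f w = w) \<and> (\<forall>w\<in>block_of q. f w = 0)"
proof -
  obtain \<alpha> \<beta> \<gamma> where \<alpha>: "\<alpha> \<in> F" and \<beta>: "\<beta> \<in> F" and \<gamma>: "\<gamma> \<in> F"
    and differ: "(\<alpha> p + \<beta> p = \<gamma> p) \<noteq> (\<alpha> q + \<beta> q = \<gamma> q)"
    using not_same unfolding same_addition_def by blast
  have coeff_add_differ: "coeff_add p \<alpha> \<beta> \<noteq> coeff_add q \<alpha> \<beta>"
    using differ coeff_add_unique[OF p \<alpha> \<beta> \<gamma>] coeff_add_unique[OF q \<alpha> \<beta> \<gamma>] by metis
  define \<sigma> where "\<sigma> = coeff_add q \<alpha> \<beta>"
  have \<sigma>: "\<sigma> \<in> F" "uminus \<circ> \<sigma> \<in> F"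
    using coeff_add_in_F[OF q(1) \<alpha> \<beta>] comp_in_F unfolding \<sigma>_def by auto
  define r where "r = (\<lambda>x. (\<alpha> x + \<beta> x) + (uminus \<circ> \<sigma>) x)"
  have r: "blockwise_scalar r"
    unfolding r_def by (intro blockwise_scalar_plus blockwise_scalar_F \<alpha> \<beta> \<sigma>)
  have r_q: "\<forall>w\<in>block_of q. r w = 0"
    using coeff_add_apply_block_of[OF q(1) _ \<alpha> \<beta>] unfolding r_def \<sigma>_def by simp
  obtain c where c: "c \<in> F" "\<forall>w\<in>block_of p. r w = c w"
    using blockwise_scalar_on_block[OF r p] by blast
  have "c \<noteq> zero_map"
  proof
    assume "c = zero_map"
    then have "coeff_add p \<alpha> \<beta> p - \<sigma> p = 0"
      using c in_block_of_self[OF p(1)] coeff_add_apply[OF p(1) \<alpha> \<beta>] unfolding r_def by simp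
    then have "coeff_add p \<alpha> \<beta> = \<sigma>"
      using F_eq_at_nonzero coeff_add_in_F[OF p(1) \<alpha> \<beta>] \<sigma>(1) p(2) by simp
    then show False
      using coeff_add_differ unfolding \<sigma>_def by simp
  qed
  then have "blockwise_scalar (inv c \<circ> r)"
    by (intro blockwise_scalar_comp blockwise_scalar_F inv_in_F c r)
  moreover have "\<forall>w\<in>block_of p. (inv c \<circ> r) w = w" and "\<forall>w\<in>block_of q. (inv c \<circ> r) w = 0"
    using c \<open>c \<noteq> zero_map\<close> r_q inv_in_F by simp_all
  ultimately show ?thesis
    by blast
qed

lemma projection_exists:
  assumes "finite P" and "P \<subseteq> Q - {0}" and p: "p \<in> Q" "p \<noteq> 0"
    and "\<forall>q\<in>P. \<not> same_addition p q"
  shows "\<exists>f. blockwise_scalar f \<and> (\<forall>w\<in>block_of p. f w = w) \<and> (\<forall>q\<in>P. \<forall>w\<in>block_of q. f w = 0)"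
  using assms
proof (induction P rule: finite_induct)
  case empty
  then show ?case
    using blockwise_scalar_F[OF id_in_F] by auto
next
  case (insert q P)
  then obtain f where f: "blockwise_scalar f" "\<forall>w\<in>block_of p. f w = w"
      "\<forall>q'\<in>P. \<forall>w\<in>block_of q'. f w = 0"
    by auto
  have "q \<in> Q" "q \<noteq> 0" "\<not> same_addition p q"
    using insert.prems by auto
  then obtain g where g: "blockwise_scalar g" "\<forall>w\<in>block_of p. g w = w" "\<forall>w\<in>block_of q. g w = 0"
    using separating_map_exists[OF p] by blast
  have "\<forall>w\<in>block_of q. (g \<circ> f) w = 0"
    using blockwise_scalar_maps_block[OF f(1) \<open>q \<in> Q\<close> \<open>q \<noteq> 0\<close>] g(3) by simp
  moreover have "\<forall>q'\<in>P. \<forall>w\<in>block_of q'. (g \<circ> f) w = 0"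
    using f(3) blockwise_scalar_zero[OF g(1)] by simp
  ultimately show ?case
    using blockwise_scalar_comp[OF g(1) f(1)] f(2) g(2) by auto
qed

lemma block_representatives:
  assumes "finite {W. is_block F W}"
  obtains k :: nat and q where "\<And>i. i < k \<Longrightarrow> q i \<in> Q \<and> q i \<noteq> 0"
    and "\<And>p. p \<in> Q \<Longrightarrow> p \<noteq> 0 \<Longrightarrow> \<exists>i<k. same_addition p (q i)"
    and "\<And>i j. i < k \<Longrightarrow> j < k \<Longrightarrow> i \<noteq> j \<Longrightarrow> \<not> same_addition (q i) (q j)"
proof -
  have "block_of ` (Q - {0}) \<subseteq> {W. is_block F W}"
    using is_block_block_of by fastforce
  then have "finite (block_of ` (Q - {0}))"
    using assms by (rule finite_subset)
  then obtain Bs where Bs: "set Bs = block_of ` (Q - {0})" "distinct Bs"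
    by (metis finite_distinct_list)
  define q where "q i = (SOME p. p \<in> Q - {0} \<and> block_of p = Bs ! i)" for i
  have q: "q i \<in> Q - {0} \<and> block_of (q i) = Bs ! i" if "i < length Bs" for i
  proof -
    have "\<exists>p. p \<in> Q - {0} \<and> block_of p = Bs ! i"
      using nth_mem[OF that] unfolding Bs(1) by blast
    then show ?thesis
      unfolding q_def by (rule someI_ex)
  qed
  show ?thesis
  proof (rule that)
    show "q i \<in> Q \<and> q i \<noteq> 0" if "i < length Bs" for i
      using q[OF that] by blast
    show "\<exists>i<length Bs. same_addition p (q i)" if "p \<in> Q" "p \<noteq> 0" for p
    proof -
      have "block_of p \<in> set Bs"
        using Bs(1) that by blast
      then obtain i where i: "i < length Bs" "Bs ! i = block_of p"
        by (auto simp: in_set_conv_nth)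
      then have "p \<in> block_of (q i)"
        using q[OF i(1)] in_block_of_self that(1) by simp
      then show ?thesis
        using i(1) that by (auto simp: in_block_of_iff)
    qed
    show "\<not> same_addition (q i) (q j)" if "i < length Bs" "j < length Bs" "i \<noteq> j" for i j
    proof
      assume "same_addition (q i) (q j)"
      then have "Bs ! i = Bs ! j"
        using block_of_eq q[OF that(1)] q[OF that(2)] by simp
      then show False
        using Bs(2) that nth_eq_iff_index_eq by blast
    qed
  qed
qed

end

locale block_decomposition = comm_nvs F for F :: "('v::group_add \<Rightarrow> 'v) set" +
  fixes k :: nat and q :: "nat \<Rightarrow> 'v" and proj :: "nat \<Rightarrow> 'v \<Rightarrow> 'v"
  assumes rep_in_quasi_kernel: "i < k \<Longrightarrow> q i \<in> Q"
    and rep_cover: "p \<in> Q \<Longrightarrow> p \<noteq> 0 \<Longrightarrow> \<exists>i<k. same_addition p (q i)"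
    and blockwise_scalar_proj: "i < k \<Longrightarrow> blockwise_scalar (proj i)"
    and proj_own_block: "i < k \<Longrightarrow> w \<in> block_of (q i) \<Longrightarrow> proj i w = w"
    and proj_other_block: "i < k \<Longrightarrow> j < k \<Longrightarrow> j \<noteq> i \<Longrightarrow> w \<in> block_of (q j) \<Longrightarrow> proj i w = 0"
begin

lemma proj_quasi_kernel:
  assumes "p \<in> Q" "p \<noteq> 0"
  obtains j where "j < k" "p \<in> block_of (q j)" "\<And>i. i < k \<Longrightarrow> proj i p = (if i = j then p else 0)"
proof -
  obtain j where j: "j < k" "same_addition p (q j)"
    using rep_cover[OF assms] by blast
  then have "p \<in> block_of (q j)"
    using assms by (simp add: in_block_of_iff)
  then show ?thesis
    using that j proj_own_block proj_other_block by simp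
qed

lemma proj_in_block: "i < k \<Longrightarrow> proj i x \<in> block_of (q i)"
proof (induction x rule: quasi_kernel_induct)
  case zero
  then show ?case
    using blockwise_scalar_zero[OF blockwise_scalar_proj] by simp
next
  case (add x y)
  then show ?case
    using blockwise_scalar_add[OF blockwise_scalar_proj] add_in_block_of by simp
next
  case (minus x)
  then show ?case
    using blockwise_scalar_commute[OF blockwise_scalar_proj uminus_in_F] minus_in_block_of by simp
next
  case (quasi_kernel p)
  obtain j where "p \<in> block_of (q j)" "\<And>i. i < k \<Longrightarrow> proj i p = (if i = j then p else 0)"
    using proj_quasi_kernel[of p] quasi_kernel by blast
  then show ?case
    using quasi_kernel by (cases "i = j") auto
qed

lemma vsum_proj: "vsum.F (\<lambda>i. proj i x) {..<k} = x"
proof (induction x rule: quasi_kernel_induct)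
  case zero
  then show ?case
    using blockwise_scalar_zero[OF blockwise_scalar_proj] by (simp add: vsum.neutral)
next
  case (add x y)
  then show ?case
    using blockwise_scalar_add[OF blockwise_scalar_proj] by (simp add: vsum.distrib)
next
  case (minus x)
  have "vsum.F (\<lambda>i. proj i (- x)) {..<k} = vsum.F (\<lambda>i. - proj i x) {..<k}"
    using blockwise_scalar_commute[OF blockwise_scalar_proj uminus_in_F] by (intro vsum.cong) auto
  also have "\<dots> = - vsum.F (\<lambda>i. proj i x) {..<k}"
    by (rule blockwise_scalar_vsum[OF blockwise_scalar_F[OF uminus_in_F], symmetric]) simp
  also have "\<dots> = - x"
    using minus by simp
  finally show ?case .
next
  case (quasi_kernel p)
  then obtain j where "j < k" "\<And>i. i < k \<Longrightarrow> proj i p = (if i = j then p else 0)"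
    using proj_quasi_kernel by blast
  then show ?case
    by (simp add: vsum.delta)
qed

lemma proj_vsum:
  assumes w: "\<And>j. j < k \<Longrightarrow> w j \<in> block_of (q j)" and i: "i < k"
  shows "proj i (vsum.F w {..<k}) = w i"
proof -
  have "proj i (vsum.F w {..<k}) = vsum.F (\<lambda>j. proj i (w j)) {..<k}"
    by (rule blockwise_scalar_vsum[OF blockwise_scalar_proj[OF i]]) simp
  also have "\<dots> = vsum.F (\<lambda>j. if j = i then w i else 0) {..<k}"
    using w i proj_own_block proj_other_block by (intro vsum.cong) auto
  finally show ?thesis
    using i by (simp add: vsum.delta)
qed

lemma eq_iff_proj_eq: "x = y \<longleftrightarrow> (\<forall>i<k. proj i x = proj i y)"
proof
  assume "\<forall>i<k. proj i x = proj i y"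
  then have "vsum.F (\<lambda>i. proj i x) {..<k} = vsum.F (\<lambda>i. proj i y) {..<k}"
    by (intro vsum.cong) auto
  then show "x = y"
    by (simp only: vsum_proj)
qed simp

end

context comm_nvs
begin

lemma block_decomposition_exists:
  assumes "finite {W. is_block F W}"
  obtains k q proj where "block_decomposition F k q proj"
proof -
  obtain k :: nat and q where q: "\<And>i. i < k \<Longrightarrow> q i \<in> Q \<and> q i \<noteq> 0"
    and cover: "\<And>p. p \<in> Q \<Longrightarrow> p \<noteq> 0 \<Longrightarrow> \<exists>i<k. same_addition p (q i)"
    and distinct: "\<And>i j. i < k \<Longrightarrow> j < k \<Longrightarrow> i \<noteq> j \<Longrightarrow> \<not> same_addition (q i) (q j)"
    using block_representatives[OF assms] by blast
  have "\<exists>f. blockwise_scalar f \<and> (\<forall>w\<in>block_of (q i). f w = w) \<and>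
      (\<forall>p\<in>q ` ({..<k} - {i}). \<forall>w\<in>block_of p. f w = 0)" if i: "i < k" for i
  proof (rule projection_exists)
    show "q ` ({..<k} - {i}) \<subseteq> Q - {0}" and "q i \<in> Q" and "q i \<noteq> 0"
      using q i by auto
    show "\<forall>p\<in>q ` ({..<k} - {i}). \<not> same_addition (q i) p"
      using distinct i by auto
  qed simp
  then obtain proj where proj: "\<And>i. i < k \<Longrightarrow> blockwise_scalar (proj i) \<and>
      (\<forall>w\<in>block_of (q i). proj i w = w) \<and> (\<forall>p\<in>q ` ({..<k} - {i}). \<forall>w\<in>block_of p. proj i w = 0)"
    by metis
  have "block_decomposition F k q proj"
    by unfold_locales (use q cover proj in auto)
  then show ?thesis ..
qed

end

section \<open>Quantifier-free formula combinators\<close>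

definition fm_true :: "'f fm" where
  "fm_true = Eq Zero Zero"

definition fm_false :: "'f fm" where
  "fm_false = Neg fm_true"

definition Disj :: "'f fm \<Rightarrow> 'f fm \<Rightarrow> 'f fm" where
  "Disj \<phi> \<psi> = Neg (Conj (Neg \<phi>) (Neg \<psi>))"

fun Conjs :: "'f fm list \<Rightarrow> 'f fm" where
  "Conjs [] = fm_true"
| "Conjs (\<phi> # \<phi>s) = Conj \<phi> (Conjs \<phi>s)"

fun Disjs :: "'f fm list \<Rightarrow> 'f fm" where
  "Disjs [] = fm_false"
| "Disjs (\<phi> # \<phi>s) = Disj \<phi> (Disjs \<phi>s)"

lemma sat_fm_true [simp]: "sat e fm_true"
  and sat_fm_false [simp]: "\<not> sat e fm_false"
  and sat_Disj [simp]: "sat e (Disj \<phi> \<psi>) \<longleftrightarrow> sat e \<phi> \<or> sat e \<psi>"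
  by (simp_all add: fm_true_def fm_false_def Disj_def)

lemma qfree_fm_true [simp]: "qfree fm_true"
  and qfree_fm_false [simp]: "qfree fm_false"
  and qfree_Disj [simp]: "qfree (Disj \<phi> \<psi>) \<longleftrightarrow> qfree \<phi> \<and> qfree \<psi>"
  and free_vars_fm_true [simp]: "free_vars fm_true = {}"
  and free_vars_fm_false [simp]: "free_vars fm_false = {}"
  and free_vars_Disj [simp]: "free_vars (Disj \<phi> \<psi>) = free_vars \<phi> \<union> free_vars \<psi>"
  and fm_syms_fm_true [simp]: "fm_syms fm_true = {}"
  and fm_syms_fm_false [simp]: "fm_syms fm_false = {}"
  and fm_syms_Disj [simp]: "fm_syms (Disj \<phi> \<psi>) = fm_syms \<phi> \<union> fm_syms \<psi>"
  by (simp_all add: fm_true_def fm_false_def Disj_def)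

lemma sat_Conjs [simp]: "sat e (Conjs \<phi>s) \<longleftrightarrow> (\<forall>\<phi>\<in>set \<phi>s. sat e \<phi>)"
  and sat_Disjs [simp]: "sat e (Disjs \<phi>s) \<longleftrightarrow> (\<exists>\<phi>\<in>set \<phi>s. sat e \<phi>)"
  by (induction \<phi>s) auto

lemma qfree_Conjs [simp]: "qfree (Conjs \<phi>s) \<longleftrightarrow> (\<forall>\<phi>\<in>set \<phi>s. qfree \<phi>)"
  and free_vars_Conjs [simp]: "free_vars (Conjs \<phi>s) = (\<Union>\<phi>\<in>set \<phi>s. free_vars \<phi>)"
  and fm_syms_Conjs [simp]: "fm_syms (Conjs \<phi>s) = (\<Union>\<phi>\<in>set \<phi>s. fm_syms \<phi>)"
  and qfree_Disjs [simp]: "qfree (Disjs \<phi>s) \<longleftrightarrow> (\<forall>\<phi>\<in>set \<phi>s. qfree \<phi>)"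
  and free_vars_Disjs [simp]: "free_vars (Disjs \<phi>s) = (\<Union>\<phi>\<in>set \<phi>s. free_vars \<phi>)"
  and fm_syms_Disjs [simp]: "fm_syms (Disjs \<phi>s) = (\<Union>\<phi>\<in>set \<phi>s. fm_syms \<phi>)"
  by (induction \<phi>s) auto

primrec atoms :: "'f fm \<Rightarrow> ('f tm \<times> 'f tm) list" where
  "atoms (Eq s t) = [(s, t)]"
| "atoms (Neg \<phi>) = atoms \<phi>"
| "atoms (Conj \<phi> \<psi>) = atoms \<phi> @ atoms \<psi>"
| "atoms (Ex n \<phi>) = atoms \<phi>"

primrec map_atoms :: "('f tm \<Rightarrow> 'f tm \<Rightarrow> 'f fm) \<Rightarrow> 'f fm \<Rightarrow> 'f fm" where
  "map_atoms g (Eq s t) = g s t"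
| "map_atoms g (Neg \<phi>) = Neg (map_atoms g \<phi>)"
| "map_atoms g (Conj \<phi> \<psi>) = Conj (map_atoms g \<phi>) (map_atoms g \<psi>)"
| "map_atoms g (Ex n \<phi>) = Ex n (map_atoms g \<phi>)"

lemma sat_map_atoms:
  "qfree \<phi> \<Longrightarrow> (\<forall>(s, t)\<in>set (atoms \<phi>). sat e (g s t) \<longleftrightarrow> sat e' (Eq s t)) \<Longrightarrow>
    sat e (map_atoms g \<phi>) \<longleftrightarrow> sat e' \<phi>"
  by (induction \<phi>) auto

lemma qfree_map_atoms: "qfree \<phi> \<Longrightarrow> (\<forall>(s, t)\<in>set (atoms \<phi>). qfree (g s t)) \<Longrightarrow> qfree (map_atoms g \<phi>)"
  by (induction \<phi>) auto

lemma free_vars_map_atoms: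
  "qfree \<phi> \<Longrightarrow> free_vars (map_atoms g \<phi>) \<subseteq> (\<Union>(s, t)\<in>set (atoms \<phi>). free_vars (g s t))"
  by (induction \<phi>) auto

lemma fm_syms_map_atoms:
  "qfree \<phi> \<Longrightarrow> fm_syms (map_atoms g \<phi>) \<subseteq> (\<Union>(s, t)\<in>set (atoms \<phi>). fm_syms (g s t))"
  by (induction \<phi>) auto

lemma free_vars_atoms: "qfree \<phi> \<Longrightarrow> free_vars \<phi> = (\<Union>(s, t)\<in>set (atoms \<phi>). tm_vars s \<union> tm_vars t)"
  by (induction \<phi>) auto

lemma fm_syms_atoms: "fm_syms \<phi> = (\<Union>(s, t)\<in>set (atoms \<phi>). tm_syms s \<union> tm_syms t)"
  by (induction \<phi>) auto

fun at_least_distinct :: "nat \<Rightarrow> 'f tm list \<Rightarrow> 'f fm" where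
  "at_least_distinct N [] = (if N = 0 then fm_true else fm_false)"
| "at_least_distinct N (t # ts) =
    Disj (at_least_distinct N ts) (Conj (Conjs (map (\<lambda>s. Neg (Eq t s)) ts)) (at_least_distinct (N - 1) ts))"

lemma sat_at_least_distinct: "sat e (at_least_distinct N ts) \<longleftrightarrow> N \<le> card (tm_eval e ` set ts)"
proof (induction ts arbitrary: N)
  case (Cons t ts)
  then show ?case
    by (cases "tm_eval e t \<in> tm_eval e ` set ts") (auto simp: insert_absorb)
qed simp

lemma qfree_at_least_distinct: "qfree (at_least_distinct N ts)"
  and free_vars_at_least_distinct: "free_vars (at_least_distinct N ts) \<subseteq> (\<Union>t\<in>set ts. tm_vars t)"
  and fm_syms_at_least_distinct: "fm_syms (at_least_distinct N ts) \<subseteq> (\<Union>t\<in>set ts. tm_syms t)"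
  by (induction N ts rule: at_least_distinct.induct) auto

primrec drop_var :: "nat \<Rightarrow> 'f tm \<Rightarrow> 'f tm" where
  "drop_var n (Var m) = (if m = n then Zero else Var m)"
| "drop_var n Zero = Zero"
| "drop_var n (Plus s t) = Plus (drop_var n s) (drop_var n t)"
| "drop_var n (Scal f t) = Scal f (drop_var n t)"

lemma tm_vars_drop_var [simp]: "tm_vars (drop_var n t) = tm_vars t - {n}"
  and tm_syms_drop_var [simp]: "tm_syms (drop_var n t) = tm_syms t"
  and tm_eval_drop_var_upd [simp]: "tm_eval (e(n := x)) (drop_var n t) = tm_eval e (drop_var n t)"
  by (induction t) auto

fun choices :: "'a list list \<Rightarrow> 'a option list list" where
  "choices [] = [[]]"
| "choices (us # uss) = concat (map (\<lambda>c. map ((#) c) (choices uss)) (None # map Some us))"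

lemma in_set_choices_iff:
  "cs \<in> set (choices uss) \<longleftrightarrow> length cs = length uss \<and>
    (\<forall>i<length uss. cs ! i = None \<or> (\<exists>u. cs ! i = Some u \<and> u \<in> set (uss ! i)))"
proof (induction uss arbitrary: cs)
  case (Cons us uss)
  show ?case
  proof
    assume "cs \<in> set (choices (us # uss))"
    then obtain c cs' where "cs = c # cs'" "c = None \<or> (\<exists>u\<in>set us. c = Some u)"
      and "cs' \<in> set (choices uss)"
      by auto
    then show "length cs = length (us # uss) \<and> (\<forall>i<length (us # uss).
        cs ! i = None \<or> (\<exists>u. cs ! i = Some u \<and> u \<in> set ((us # uss) ! i)))"
      using Cons.IH by (auto simp: nth_Cons split: nat.split)
  next
    assume cs: "length cs = length (us # uss) \<and> (\<forall>i<length (us # uss).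
        cs ! i = None \<or> (\<exists>u. cs ! i = Some u \<and> u \<in> set ((us # uss) ! i)))"
    then obtain c cs' where c: "cs = c # cs'"
      by (cases cs) auto
    have "cs' \<in> set (choices uss)"
      using Cons.IH cs c by auto
    moreover have "c = None \<or> (\<exists>u\<in>set us. c = Some u)"
      using cs c by (cases c) force+
    ultimately show "cs \<in> set (choices (us # uss))"
      using c by auto
  qed
qed simp

section \<open>Elimination of one existential quantifier\<close>

lemma admits_QE_if_Ex_eliminable:
  fixes F :: "('v::group_add \<Rightarrow> 'v) set"
  assumes elim: "\<And>n \<psi>. qfree \<psi> \<Longrightarrow> fm_syms \<psi> \<subseteq> F \<Longrightarrow> \<exists>\<psi>'. qfree \<psi>' \<and> fm_syms \<psi>' \<subseteq> F \<and>
    free_vars \<psi>' \<subseteq> free_vars \<psi> - {n} \<and> (\<forall>e. sat e \<psi>' \<longleftrightarrow> (\<exists>x. sat (e(n := x)) \<psi>))"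
  shows "admits_QE F"
  unfolding admits_QE_def
proof (intro allI impI)
  fix \<phi> :: "('v \<Rightarrow> 'v) fm"
  show "fm_syms \<phi> \<subseteq> F \<Longrightarrow>
    \<exists>\<psi>. qfree \<psi> \<and> fm_syms \<psi> \<subseteq> F \<and> free_vars \<psi> \<subseteq> free_vars \<phi> \<and> (\<forall>e. sat e \<phi> \<longleftrightarrow> sat e \<psi>)"
  proof (induction \<phi>)
    case (Eq s t)
    then show ?case
      by (intro exI[of _ "Eq s t"]) auto
  next
    case (Neg \<phi>)
    then obtain \<psi> where "qfree \<psi> \<and> fm_syms \<psi> \<subseteq> F \<and> free_vars \<psi> \<subseteq> free_vars \<phi> \<and> (\<forall>e. sat e \<phi> \<longleftrightarrow> sat e \<psi>)"
      by auto
    then show ?case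
      by (intro exI[of _ "Neg \<psi>"]) auto
  next
    case (Conj \<phi>1 \<phi>2)
    then obtain \<psi>1 \<psi>2
      where "qfree \<psi>1 \<and> fm_syms \<psi>1 \<subseteq> F \<and> free_vars \<psi>1 \<subseteq> free_vars \<phi>1 \<and> (\<forall>e. sat e \<phi>1 \<longleftrightarrow> sat e \<psi>1)"
        and "qfree \<psi>2 \<and> fm_syms \<psi>2 \<subseteq> F \<and> free_vars \<psi>2 \<subseteq> free_vars \<phi>2 \<and> (\<forall>e. sat e \<phi>2 \<longleftrightarrow> sat e \<psi>2)"
      by auto
    then show ?case
      by (intro exI[of _ "Conj \<psi>1 \<psi>2"]) auto
  next
    case (Ex n \<phi>)
    then obtain \<psi> where \<psi>: "qfree \<psi>" "fm_syms \<psi> \<subseteq> F" "free_vars \<psi> \<subseteq> free_vars \<phi>"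
      "\<forall>e. sat e \<phi> \<longleftrightarrow> sat e \<psi>"
      by auto
    then obtain \<psi>' where "qfree \<psi>'" "fm_syms \<psi>' \<subseteq> F" "free_vars \<psi>' \<subseteq> free_vars \<psi> - {n}"
      "\<forall>e. sat e \<psi>' \<longleftrightarrow> (\<exists>x. sat (e(n := x)) \<psi>)"
      using elim by blast
    then show ?case
      using \<psi> by (intro exI[of _ \<psi>']) auto
  qed
qed

context block_decomposition
begin

definition proj_tm :: "nat \<Rightarrow> ('v \<Rightarrow> 'v) tm \<Rightarrow> ('v \<Rightarrow> 'v) tm" where
  "proj_tm i = (SOME T. \<forall>t. (\<forall>e. tm_eval e (T t) = proj i (tm_eval e t)) \<and>
     tm_vars (T t) = tm_vars t \<and> tm_syms (T t) \<subseteq> F \<union> tm_syms t)"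

lemma tm_eval_proj_tm: "tm_eval e (proj_tm i t) = proj i (tm_eval e t)"
  and tm_vars_proj_tm: "tm_vars (proj_tm i t) = tm_vars t"
  and tm_syms_proj_tm: "tm_syms (proj_tm i t) \<subseteq> F \<union> tm_syms t"
  if "i < k"
proof -
  have "\<exists>T. \<forall>t. (\<forall>e. tm_eval e (T t) = proj i (tm_eval e t)) \<and>
      tm_vars (T t) = tm_vars t \<and> tm_syms (T t) \<subseteq> F \<union> tm_syms t"
    using blockwise_scalar_term_definable[OF blockwise_scalar_proj[OF that]]
    unfolding term_definable_def .
  from someI_ex[OF this] show "tm_eval e (proj_tm i t) = proj i (tm_eval e t)"
    and "tm_vars (proj_tm i t) = tm_vars t" and "tm_syms (proj_tm i t) \<subseteq> F \<union> tm_syms t"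
    unfolding proj_tm_def by blast+
qed

primrec coeff :: "nat \<Rightarrow> nat \<Rightarrow> ('v \<Rightarrow> 'v) tm \<Rightarrow> ('v \<Rightarrow> 'v)" where
  "coeff i n (Var m) = (if m = n then id else zero_map)"
| "coeff i n Zero = zero_map"
| "coeff i n (Plus s t) = coeff_add (q i) (coeff i n s) (coeff i n t)"
| "coeff i n (Scal f t) = f \<circ> coeff i n t"

lemma coeff_in_F: "tm_syms t \<subseteq> F \<Longrightarrow> i < k \<Longrightarrow> coeff i n t \<in> F"
  by (induction t) (auto simp: coeff_add_in_F rep_in_quasi_kernel comp_in_F)

lemma proj_tm_eval_coeff:
  assumes "tm_syms t \<subseteq> F" and i: "i < k"
  shows "proj i (tm_eval e t) = coeff i n t (proj i (e n)) + proj i (tm_eval e (drop_var n t))"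
  using assms(1)
proof (induction t)
  case (Plus s t)
  let ?w = "proj i (e n)"
  have "proj i (tm_eval e (Plus s t)) = proj i (tm_eval e s) + proj i (tm_eval e t)"
    using blockwise_scalar_add[OF blockwise_scalar_proj[OF i]] by simp
  also have "\<dots> = (coeff i n s ?w + coeff i n t ?w) +
      (proj i (tm_eval e (drop_var n s)) + proj i (tm_eval e (drop_var n t)))"
    using Plus by (simp add: add.assoc vadd.left_commute)
  also have "\<dots> = coeff i n (Plus s t) ?w + proj i (tm_eval e (drop_var n (Plus s t)))"
    using coeff_add_apply_block_of[OF rep_in_quasi_kernel[OF i] proj_in_block[OF i]]
      coeff_in_F Plus.prems i blockwise_scalar_add[OF blockwise_scalar_proj[OF i]] by simp
  finally show ?case .
next
  case (Scal f t)
  then have f: "f \<in> F"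
    by simp
  have "proj i (tm_eval e (Scal f t)) = f (proj i (tm_eval e t))"
    using blockwise_scalar_commute[OF blockwise_scalar_proj[OF i] f] by simp
  then show ?case
    using Scal f by (simp add: F_add blockwise_scalar_commute[OF blockwise_scalar_proj[OF i] f])
qed (use blockwise_scalar_zero[OF blockwise_scalar_proj[OF i]] in auto)

definition component_eq :: "nat \<Rightarrow> nat \<Rightarrow> (nat \<Rightarrow> 'v) \<Rightarrow> ('v \<Rightarrow> 'v) tm \<Rightarrow> ('v \<Rightarrow> 'v) tm \<Rightarrow> 'v \<Rightarrow> bool" where
  "component_eq i n e s t w \<longleftrightarrow>
     coeff i n s w + proj i (tm_eval e (drop_var n s)) = coeff i n t w + proj i (tm_eval e (drop_var n t))"

lemma sat_Eq_upd_iff: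
  assumes "tm_syms s \<subseteq> F" and "tm_syms t \<subseteq> F"
  shows "sat (e(n := x)) (Eq s t) \<longleftrightarrow> (\<forall>i<k. component_eq i n e s t (proj i x))"
  using eq_iff_proj_eq[of "tm_eval (e(n := x)) s" "tm_eval (e(n := x)) t"]
    proj_tm_eval_coeff[OF assms(1), of _ "e(n := x)" n] proj_tm_eval_coeff[OF assms(2), of _ "e(n := x)" n]
  by (simp add: component_eq_def)

definition coeff_diff :: "nat \<Rightarrow> nat \<Rightarrow> ('v \<Rightarrow> 'v) tm \<Rightarrow> ('v \<Rightarrow> 'v) tm \<Rightarrow> ('v \<Rightarrow> 'v)" where
  "coeff_diff i n s t = coeff_add (q i) (coeff i n s) (uminus \<circ> coeff i n t)"

lemma coeff_diff_in_F: "i < k \<Longrightarrow> tm_syms s \<subseteq> F \<Longrightarrow> tm_syms t \<subseteq> F \<Longrightarrow> coeff_diff i n s t \<in> F"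
  unfolding coeff_diff_def by (intro coeff_add_in_F rep_in_quasi_kernel comp_in_F coeff_in_F) simp_all

lemma coeff_diff_apply:
  assumes "i < k" and "tm_syms s \<subseteq> F" and "tm_syms t \<subseteq> F" and "w \<in> block_of (q i)"
  shows "coeff_diff i n s t w = coeff i n s w - coeff i n t w"
proof -
  have "coeff i n s \<in> F" "uminus \<circ> coeff i n t \<in> F"
    using coeff_in_F comp_in_F assms by auto
  then show ?thesis
    unfolding coeff_diff_def
    using coeff_add_apply_block_of[OF rep_in_quasi_kernel[OF assms(1)] assms(4), symmetric] by simp
qed

definition solution_tm :: "nat \<Rightarrow> nat \<Rightarrow> ('v \<Rightarrow> 'v) tm \<Rightarrow> ('v \<Rightarrow> 'v) tm \<Rightarrow> ('v \<Rightarrow> 'v) tm" where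
  "solution_tm i n s t =
     Scal (inv (coeff_diff i n s t)) (Plus (proj_tm i (drop_var n t)) (Scal uminus (proj_tm i (drop_var n s))))"

lemma component_eq_iff_solution:
  assumes i: "i < k" and s: "tm_syms s \<subseteq> F" and t: "tm_syms t \<subseteq> F"
    and w: "w \<in> block_of (q i)" and d: "coeff_diff i n s t \<noteq> zero_map"
  shows "component_eq i n e s t w \<longleftrightarrow> w = tm_eval e (solution_tm i n s t)"
proof -
  let ?A = "proj i (tm_eval e (drop_var n s))" and ?B = "proj i (tm_eval e (drop_var n t))"
  have dF: "coeff_diff i n s t \<in> F"
    using coeff_diff_in_F i s t by blast
  have "component_eq i n e s t w \<longleftrightarrow> coeff_diff i n s t w = ?B - ?A"
    unfolding component_eq_def add_eq_add_iff coeff_diff_apply[OF i s t w] ..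
  also have "\<dots> \<longleftrightarrow> w = inv (coeff_diff i n s t) (?B - ?A)"
    using inv_F_apply[OF dF d] F_inv_apply[OF dF d] by metis
  also have "inv (coeff_diff i n s t) (?B - ?A) = tm_eval e (solution_tm i n s t)"
    unfolding solution_tm_def using tm_eval_proj_tm[OF i] by simp
  finally show ?thesis .
qed

lemma component_eq_iff_of_coeff_diff_zero:
  assumes i: "i < k" and s: "tm_syms s \<subseteq> F" and t: "tm_syms t \<subseteq> F"
    and w: "w \<in> block_of (q i)" and d: "coeff_diff i n s t = zero_map"
  shows "component_eq i n e s t w \<longleftrightarrow> proj i (tm_eval e (drop_var n s)) = proj i (tm_eval e (drop_var n t))"
proof -
  have "coeff i n s w = coeff i n t w"
    using coeff_diff_apply[OF i s t w, of n] d by simp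
  then show ?thesis
    unfolding component_eq_def by simp
qed

lemma solution_in_block:
  assumes i: "i < k" and s: "tm_syms s \<subseteq> F" and t: "tm_syms t \<subseteq> F"
    and d: "coeff_diff i n s t \<noteq> zero_map"
  shows "tm_eval e (solution_tm i n s t) \<in> block_of (q i)"
proof -
  have "proj i (tm_eval e (drop_var n t)) + - proj i (tm_eval e (drop_var n s)) \<in> block_of (q i)"
    using proj_in_block[OF i] by (intro add_in_block_of minus_in_block_of)
  then show ?thesis
    unfolding solution_tm_def
    using tm_eval_proj_tm[OF i] F_closed_block_of inv_in_F[OF coeff_diff_in_F[OF i s t] d] by simp
qed

lemma tm_syms_solution_tm:
  assumes i: "i < k" and s: "tm_syms s \<subseteq> F" and t: "tm_syms t \<subseteq> F"
    and d: "coeff_diff i n s t \<noteq> zero_map"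
  shows "tm_syms (solution_tm i n s t) \<subseteq> F"
  unfolding solution_tm_def
  using tm_syms_proj_tm[OF i, of "drop_var n t"] tm_syms_proj_tm[OF i, of "drop_var n s"] s t
    inv_in_F[OF coeff_diff_in_F[OF i s t] d] by auto

lemma tm_vars_solution_tm: "i < k \<Longrightarrow> tm_vars (solution_tm i n s t) = tm_vars s \<union> tm_vars t - {n}"
  unfolding solution_tm_def using tm_vars_proj_tm by auto

lemma tm_syms_atoms: "(s, t) \<in> set (atoms \<psi>) \<Longrightarrow> fm_syms \<psi> \<subseteq> F \<Longrightarrow> tm_syms s \<subseteq> F \<and> tm_syms t \<subseteq> F"
  using fm_syms_atoms[of \<psi>] by blast

definition solutions :: "nat \<Rightarrow> nat \<Rightarrow> ('v \<Rightarrow> 'v) fm \<Rightarrow> ('v \<Rightarrow> 'v) tm list" where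
  "solutions i n \<psi> =
     map (\<lambda>(s, t). solution_tm i n s t) (filter (\<lambda>(s, t). coeff_diff i n s t \<noteq> zero_map) (atoms \<psi>))"

lemma in_set_solutions_iff:
  "u \<in> set (solutions i n \<psi>) \<longleftrightarrow>
    (\<exists>s t. (s, t) \<in> set (atoms \<psi>) \<and> coeff_diff i n s t \<noteq> zero_map \<and> u = solution_tm i n s t)"
  unfolding solutions_def by auto

lemma solutions_in_block:
  "i < k \<Longrightarrow> fm_syms \<psi> \<subseteq> F \<Longrightarrow> u \<in> set (solutions i n \<psi>) \<Longrightarrow> tm_eval e u \<in> block_of (q i)"
  unfolding in_set_solutions_iff using solution_in_block tm_syms_atoms by blast

lemma solutions_syntax:
  assumes "i < k" and "qfree \<psi>" and "fm_syms \<psi> \<subseteq> F" and "u \<in> set (solutions i n \<psi>)"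
  shows "tm_syms u \<subseteq> F" and "tm_vars u \<subseteq> free_vars \<psi> - {n}"
proof -
  obtain s t where st: "(s, t) \<in> set (atoms \<psi>)" "coeff_diff i n s t \<noteq> zero_map" "u = solution_tm i n s t"
    using assms(4) unfolding in_set_solutions_iff by blast
  have "tm_syms s \<subseteq> F" "tm_syms t \<subseteq> F"
    using tm_syms_atoms[OF st(1) assms(3)] by blast+
  then show "tm_syms u \<subseteq> F"
    using tm_syms_solution_tm[OF assms(1) _ _ st(2)] st(3) by blast
  have "tm_vars s \<union> tm_vars t \<subseteq> free_vars \<psi>"
    using free_vars_atoms[OF assms(2)] st(1) by blast
  then show "tm_vars u \<subseteq> free_vars \<psi> - {n}"
    using tm_vars_solution_tm[OF assms(1)] st(3) by blast
qed

text \<open>The \<open>i\<close>-th component of \<open>s = t\<close>, with \<open>x\<^sub>n\<close> eliminated according to the choice \<open>cs ! i\<close>: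
  \<open>Some u\<close> means that the \<open>i\<close>-th component of \<open>x\<^sub>n\<close> is the value of \<open>u\<close>, \<open>None\<close> that it differs
  from all solutions, in which case the component equation holds only if it does not involve \<open>x\<^sub>n\<close>.\<close>

definition component_fm :: "('v \<Rightarrow> 'v) tm option list \<Rightarrow> nat \<Rightarrow> nat \<Rightarrow> ('v \<Rightarrow> 'v) tm \<Rightarrow> ('v \<Rightarrow> 'v) tm \<Rightarrow> ('v \<Rightarrow> 'v) fm" where
  "component_fm cs i n s t = (case cs ! i of
      Some u \<Rightarrow> Eq (Plus (Scal (coeff i n s) u) (proj_tm i (drop_var n s)))
                 (Plus (Scal (coeff i n t) u) (proj_tm i (drop_var n t)))
    | None \<Rightarrow> if coeff_diff i n s t = zero_map then Eq (proj_tm i (drop_var n s)) (proj_tm i (drop_var n t))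
              else fm_false)"

definition atom_fm :: "('v \<Rightarrow> 'v) tm option list \<Rightarrow> nat \<Rightarrow> ('v \<Rightarrow> 'v) tm \<Rightarrow> ('v \<Rightarrow> 'v) tm \<Rightarrow> ('v \<Rightarrow> 'v) fm" where
  "atom_fm cs n s t = Conjs (map (\<lambda>i. component_fm cs i n s t) [0..<k])"

definition avoid_fm :: "nat \<Rightarrow> nat \<Rightarrow> ('v \<Rightarrow> 'v) fm \<Rightarrow> ('v \<Rightarrow> 'v) fm" where
  "avoid_fm i n \<psi> = (if finite (block_of (q i))
     then Neg (at_least_distinct (card (block_of (q i))) (solutions i n \<psi>)) else fm_true)"

definition elim_Ex :: "nat \<Rightarrow> ('v \<Rightarrow> 'v) fm \<Rightarrow> ('v \<Rightarrow> 'v) fm" where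
  "elim_Ex n \<psi> = Disjs (map (\<lambda>cs.
     Conj (Conjs (map (\<lambda>i. avoid_fm i n \<psi>) (filter (\<lambda>i. cs ! i = None) [0..<k])))
       (map_atoms (atom_fm cs n) \<psi>))
     (choices (map (\<lambda>i. solutions i n \<psi>) [0..<k])))"

lemma sat_component_fm:
  assumes i: "i < k" and s: "tm_syms s \<subseteq> F" and t: "tm_syms t \<subseteq> F" and w: "w \<in> block_of (q i)"
    and some: "\<And>u. cs ! i = Some u \<Longrightarrow> tm_eval e u = w"
    and none: "cs ! i = None \<Longrightarrow> coeff_diff i n s t \<noteq> zero_map \<Longrightarrow> w \<noteq> tm_eval e (solution_tm i n s t)"
  shows "sat e (component_fm cs i n s t) \<longleftrightarrow> component_eq i n e s t w"
proof (cases "cs ! i")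
  case None
  then show ?thesis
    using component_eq_iff_of_coeff_diff_zero[OF i s t w] component_eq_iff_solution[OF i s t w] none
      tm_eval_proj_tm[OF i] unfolding component_fm_def by auto
next
  case (Some u)
  then show ?thesis
    using some[OF Some] tm_eval_proj_tm[OF i] unfolding component_fm_def component_eq_def by simp
qed

lemma sat_map_atoms_atom_fm:
  assumes \<psi>: "qfree \<psi>" "fm_syms \<psi> \<subseteq> F"
    and w: "\<And>i. i < k \<Longrightarrow> w i \<in> block_of (q i)" and x: "\<And>i. i < k \<Longrightarrow> proj i x = w i"
    and some: "\<And>i u. i < k \<Longrightarrow> cs ! i = Some u \<Longrightarrow> tm_eval e u = w i"
    and none: "\<And>i u. i < k \<Longrightarrow> cs ! i = None \<Longrightarrow> u \<in> set (solutions i n \<psi>) \<Longrightarrow> tm_eval e u \<noteq> w i"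
  shows "sat e (map_atoms (atom_fm cs n) \<psi>) \<longleftrightarrow> sat (e(n := x)) \<psi>"
proof (rule sat_map_atoms[OF \<psi>(1)], clarify)
  fix s t assume st: "(s, t) \<in> set (atoms \<psi>)"
  then have s: "tm_syms s \<subseteq> F" and t: "tm_syms t \<subseteq> F"
    using tm_syms_atoms \<psi>(2) by blast+
  have "sat e (component_fm cs i n s t) \<longleftrightarrow> component_eq i n e s t (w i)" if i: "i < k" for i
  proof (rule sat_component_fm[OF i s t w[OF i]])
    show "tm_eval e u = w i" if "cs ! i = Some u" for u
      using some i that by blast
    show "w i \<noteq> tm_eval e (solution_tm i n s t)" if "cs ! i = None" "coeff_diff i n s t \<noteq> zero_map"
    proof -
      have "solution_tm i n s t \<in> set (solutions i n \<psi>)"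
        using that(2) st unfolding in_set_solutions_iff by blast
      then show ?thesis
        using none[OF i that(1)] by fastforce
    qed
  qed
  then show "sat e (atom_fm cs n s t) \<longleftrightarrow> sat (e(n := x)) (Eq s t)"
    using sat_Eq_upd_iff[OF s t] x by (auto simp: atom_fm_def)
qed

lemma sat_avoid_fm:
  assumes i: "i < k" and \<psi>: "fm_syms \<psi> \<subseteq> F"
  shows "sat e (avoid_fm i n \<psi>) \<longleftrightarrow> (\<exists>w\<in>block_of (q i). \<forall>u\<in>set (solutions i n \<psi>). tm_eval e u \<noteq> w)"
proof -
  let ?S = "tm_eval e ` set (solutions i n \<psi>)"
  have S: "?S \<subseteq> block_of (q i)"
    using solutions_in_block[OF i \<psi>] by blast
  show ?thesis
  proof (cases "finite (block_of (q i))")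
    case True
    have "sat e (avoid_fm i n \<psi>) \<longleftrightarrow> \<not> block_of (q i) \<subseteq> ?S"
      unfolding avoid_fm_def using True sat_at_least_distinct card_seteq[OF True S] card_mono[of ?S]
      by auto
    then show ?thesis
      by force
  next
    case False
    then have "infinite (block_of (q i) - ?S)"
      by (simp add: Diff_infinite_finite)
    then obtain w where "w \<in> block_of (q i) - ?S"
      using infinite_imp_nonempty by blast
    then show ?thesis
      unfolding avoid_fm_def using False by (auto intro!: bexI[of _ w])
  qed
qed

lemma sat_elim_Ex_imp_Ex:
  assumes \<psi>: "qfree \<psi>" "fm_syms \<psi> \<subseteq> F" and sat: "sat e (elim_Ex n \<psi>)"
  shows "\<exists>x. sat (e(n := x)) \<psi>"
proof -
  obtain cs where cs: "cs \<in> set (choices (map (\<lambda>i. solutions i n \<psi>) [0..<k]))"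
    and avoid: "\<And>i. i < k \<Longrightarrow> cs ! i = None \<Longrightarrow> sat e (avoid_fm i n \<psi>)"
    and atoms: "sat e (map_atoms (atom_fm cs n) \<psi>)"
    using sat unfolding elim_Ex_def by fastforce
  have cs_some: "\<And>i u. i < k \<Longrightarrow> cs ! i = Some u \<Longrightarrow> u \<in> set (solutions i n \<psi>)"
    using cs unfolding in_set_choices_iff by fastforce
  define w where "w i = (case cs ! i of Some u \<Rightarrow> tm_eval e u
     | None \<Rightarrow> (SOME w. w \<in> block_of (q i) \<and> (\<forall>u\<in>set (solutions i n \<psi>). tm_eval e u \<noteq> w)))" for i
  have w_none: "w i \<in> block_of (q i) \<and> (\<forall>u\<in>set (solutions i n \<psi>). tm_eval e u \<noteq> w i)"
    if i: "i < k" and "cs ! i = None" for i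
    using someI_ex[OF avoid[OF that, unfolded sat_avoid_fm[OF i \<psi>(2)] Bex_def]] that(2)
    unfolding w_def by simp
  have w: "w i \<in> block_of (q i)" if i: "i < k" for i
    using w_none[OF i] solutions_in_block[OF i \<psi>(2) cs_some[OF i]] unfolding w_def
    by (cases "cs ! i") auto
  have "sat e (map_atoms (atom_fm cs n) \<psi>) \<longleftrightarrow> sat (e(n := vsum.F w {..<k})) \<psi>"
  proof (rule sat_map_atoms_atom_fm[OF \<psi> w])
    show "proj i (vsum.F w {..<k}) = w i" if "i < k" for i
      using proj_vsum w that by blast
    show "tm_eval e u = w i" if "i < k" "cs ! i = Some u" for i u
      using that unfolding w_def by simp
    show "tm_eval e u \<noteq> w i" if "i < k" "cs ! i = None" "u \<in> set (solutions i n \<psi>)" for i u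
      using w_none that by blast
  qed
  then show ?thesis
    using atoms by blast
qed

lemma Ex_imp_sat_elim_Ex:
  assumes \<psi>: "qfree \<psi>" "fm_syms \<psi> \<subseteq> F" and sat: "sat (e(n := x)) \<psi>"
  shows "sat e (elim_Ex n \<psi>)"
proof -
  define is_sol where "is_sol i u \<longleftrightarrow> u \<in> set (solutions i n \<psi>) \<and> tm_eval e u = proj i x" for i u
  define cs where "cs = map (\<lambda>i. if \<exists>u. is_sol i u then Some (SOME u. is_sol i u) else None) [0..<k]"
  have cs_some: "is_sol i u" if "i < k" "cs ! i = Some u" for i u
    using that someI_ex[of "is_sol i"] unfolding cs_def by (auto split: if_splits)
  have cs_none: "\<not> is_sol i u" if "i < k" "cs ! i = None" for i u
    using that unfolding cs_def by (auto split: if_splits)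
  have "cs \<in> set (choices (map (\<lambda>i. solutions i n \<psi>) [0..<k]))"
    unfolding in_set_choices_iff
  proof (intro conjI allI impI)
    show "length cs = length (map (\<lambda>i. solutions i n \<psi>) [0..<k])"
      unfolding cs_def by simp
    show "cs ! i = None \<or> (\<exists>u. cs ! i = Some u \<and> u \<in> set (map (\<lambda>i. solutions i n \<psi>) [0..<k] ! i))"
      if "i < length (map (\<lambda>i. solutions i n \<psi>) [0..<k])" for i
      using cs_some[of i] that unfolding is_sol_def by (cases "cs ! i") auto
  qed
  moreover have "sat e (avoid_fm i n \<psi>)" if "i < k" "cs ! i = None" for i
    using sat_avoid_fm[OF that(1) \<psi>(2)] proj_in_block[OF that(1)] cs_none[OF that]
    unfolding is_sol_def by blast
  moreover have "sat e (map_atoms (atom_fm cs n) \<psi>)"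
    using sat_map_atoms_atom_fm[OF \<psi> proj_in_block refl, where cs = cs and e = e and n = n]
      cs_some cs_none sat
    unfolding is_sol_def by blast
  ultimately show ?thesis
    unfolding elim_Ex_def by force
qed

lemma component_fm_syntax:
  assumes i: "i < k" and \<psi>: "qfree \<psi>" "fm_syms \<psi> \<subseteq> F" and st: "(s, t) \<in> set (atoms \<psi>)"
    and cs: "\<And>u. cs ! i = Some u \<Longrightarrow> u \<in> set (solutions i n \<psi>)"
  shows "qfree (component_fm cs i n s t)" and "fm_syms (component_fm cs i n s t) \<subseteq> F"
    and "free_vars (component_fm cs i n s t) \<subseteq> free_vars \<psi> - {n}"
proof -
  have s: "tm_syms s \<subseteq> F" and t: "tm_syms t \<subseteq> F"
    using tm_syms_atoms[OF st \<psi>(2)] by blast+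
  have "tm_vars s \<union> tm_vars t \<subseteq> free_vars \<psi>"
    using free_vars_atoms[OF \<psi>(1)] st by blast
  then have vars: "tm_vars (proj_tm i (drop_var n r)) \<subseteq> free_vars \<psi> - {n}" if "r \<in> {s, t}" for r
    using tm_vars_proj_tm[OF i] that by auto
  have syms: "tm_syms (proj_tm i (drop_var n r)) \<subseteq> F" if "r \<in> {s, t}" for r
    using tm_syms_proj_tm[OF i, of "drop_var n r"] s t that by auto
  show "qfree (component_fm cs i n s t)"
    unfolding component_fm_def by (simp split: option.split)
  have "tm_syms u \<subseteq> F" and "tm_vars u \<subseteq> free_vars \<psi> - {n}" if "cs ! i = Some u" for u
    using solutions_syntax[OF i \<psi> cs[OF that]] by blast+
  then show "fm_syms (component_fm cs i n s t) \<subseteq> F"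
    and "free_vars (component_fm cs i n s t) \<subseteq> free_vars \<psi> - {n}"
    unfolding component_fm_def using syms vars coeff_in_F[OF s i] coeff_in_F[OF t i]
    by (auto split: option.split)
qed

lemma avoid_fm_syntax:
  assumes i: "i < k" and \<psi>: "qfree \<psi>" "fm_syms \<psi> \<subseteq> F"
  shows "qfree (avoid_fm i n \<psi>)" and "fm_syms (avoid_fm i n \<psi>) \<subseteq> F"
    and "free_vars (avoid_fm i n \<psi>) \<subseteq> free_vars \<psi> - {n}"
proof -
  show "qfree (avoid_fm i n \<psi>)"
    by (simp add: avoid_fm_def qfree_at_least_distinct)
  have "(\<Union>u\<in>set (solutions i n \<psi>). tm_syms u) \<subseteq> F"
    using solutions_syntax(1)[OF i \<psi>] by blast
  then have "fm_syms (at_least_distinct N (solutions i n \<psi>)) \<subseteq> F" for N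
    using fm_syms_at_least_distinct[of N "solutions i n \<psi>"] by blast
  then show "fm_syms (avoid_fm i n \<psi>) \<subseteq> F"
    unfolding avoid_fm_def by simp
  have "(\<Union>u\<in>set (solutions i n \<psi>). tm_vars u) \<subseteq> free_vars \<psi> - {n}"
    using solutions_syntax(2)[OF i \<psi>] by blast
  then have "free_vars (at_least_distinct N (solutions i n \<psi>)) \<subseteq> free_vars \<psi> - {n}" for N
    using free_vars_at_least_distinct[of N "solutions i n \<psi>"] by blast
  then show "free_vars (avoid_fm i n \<psi>) \<subseteq> free_vars \<psi> - {n}"
    unfolding avoid_fm_def by simp
qed

lemma map_atoms_atom_fm_syntax:
  assumes \<psi>: "qfree \<psi>" "fm_syms \<psi> \<subseteq> F"
    and cs: "cs \<in> set (choices (map (\<lambda>i. solutions i n \<psi>) [0..<k]))"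
  shows "qfree (map_atoms (atom_fm cs n) \<psi>)" and "fm_syms (map_atoms (atom_fm cs n) \<psi>) \<subseteq> F"
    and "free_vars (map_atoms (atom_fm cs n) \<psi>) \<subseteq> free_vars \<psi> - {n}"
proof -
  have cs_some: "\<And>i u. i < k \<Longrightarrow> cs ! i = Some u \<Longrightarrow> u \<in> set (solutions i n \<psi>)"
    using cs unfolding in_set_choices_iff by fastforce
  have "qfree (atom_fm cs n s t)" and "fm_syms (atom_fm cs n s t) \<subseteq> F"
    and "free_vars (atom_fm cs n s t) \<subseteq> free_vars \<psi> - {n}" if st: "(s, t) \<in> set (atoms \<psi>)" for s t
  proof -
    have component: "qfree (component_fm cs i n s t) \<and> fm_syms (component_fm cs i n s t) \<subseteq> F \<and>
        free_vars (component_fm cs i n s t) \<subseteq> free_vars \<psi> - {n}" if "i < k" for i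
      using component_fm_syntax[OF that \<psi> st cs_some[OF that]] by blast
    show "qfree (atom_fm cs n s t)" and "fm_syms (atom_fm cs n s t) \<subseteq> F"
      and "free_vars (atom_fm cs n s t) \<subseteq> free_vars \<psi> - {n}"
      unfolding atom_fm_def by (auto dest!: component)
  qed
  then show "qfree (map_atoms (atom_fm cs n) \<psi>)"
    and "fm_syms (map_atoms (atom_fm cs n) \<psi>) \<subseteq> F"
    and "free_vars (map_atoms (atom_fm cs n) \<psi>) \<subseteq> free_vars \<psi> - {n}"
    using qfree_map_atoms[OF \<psi>(1)] fm_syms_map_atoms[OF \<psi>(1), of "atom_fm cs n"]
      free_vars_map_atoms[OF \<psi>(1), of "atom_fm cs n"] by blast+
qed

lemma elim_Ex_syntax:
  assumes \<psi>: "qfree \<psi>" "fm_syms \<psi> \<subseteq> F"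
  shows "qfree (elim_Ex n \<psi>)" and "fm_syms (elim_Ex n \<psi>) \<subseteq> F"
    and "free_vars (elim_Ex n \<psi>) \<subseteq> free_vars \<psi> - {n}"
  unfolding elim_Ex_def
  using avoid_fm_syntax[OF _ \<psi>, where n = n] map_atoms_atom_fm_syntax[OF \<psi>, where n = n]
  by (simp_all add: UN_subset_iff)

lemma Ex_eliminable:
  assumes "qfree \<psi>" and "fm_syms \<psi> \<subseteq> F"
  shows "\<exists>\<psi>'. qfree \<psi>' \<and> fm_syms \<psi>' \<subseteq> F \<and> free_vars \<psi>' \<subseteq> free_vars \<psi> - {n} \<and>
    (\<forall>e. sat e \<psi>' \<longleftrightarrow> (\<exists>x. sat (e(n := x)) \<psi>))"
  using elim_Ex_syntax[OF assms] sat_elim_Ex_imp_Ex[OF assms] Ex_imp_sat_elim_Ex[OF assms] by blast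

end

theorem mainTheorem16:
  fixes F :: "('v::group_add \<Rightarrow> 'v) set"
  assumes "near_vector_space F"
    and "commutative_nvs F"
    and "finite {W. is_block F W}"
  shows "admits_QE F"
proof -
  interpret comm_nvs F
    using assms(1,2) by (intro comm_nvs.intro nvs.intro comm_nvs_axioms.intro)
  obtain k q proj where "block_decomposition F k q proj"
    using block_decomposition_exists[OF assms(3)] by blast
  then interpret block_decomposition F k q proj .
  show ?thesis
    using Ex_eliminable by (rule admits_QE_if_Ex_eliminable)
qed

end
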